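(* Let $A=\{a_1<\cdots<a_N\}$ be a finite set of real numbers, with $N$ sufficiently large (larger than some absolute constant). Then there exist a nonempty set $H'\subseteq H(A)$ of size $m$ and a positive integer $L$ such that (i) $Lm\geq N/(3\log_2N)$; (ii) $|A+A-A| \geq Lm^2/2$; (iii) for each $h\in H'$, $L\leq |A_h|\leq 2L$.
   Context: For $A=\{a_1<\cdots<a_N\}\subset\mathbb{R}$, $H(A)=\{a_{j+1}-a_j:j=1,\ldots,N-1\}$ is the set of consecutive differences of $A$, and for $h\in H(A)$, $A_h=\{a_i\in A: a_{i+1}-a_i=h\}$. $A+A-A=\{a+b-c:a,b,c\in A\}$. *)

theory Defs
  imports Complex_Main
begin

definition next_in :: "real set \<Rightarrow> real \<Rightarrow> real" where
  "next_in A a = Min {b \<in> A. a < b}"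

definition non_max :: "real set \<Rightarrow> real set" where
  "non_max A = {a \<in> A. \<exists>b\<in>A. a < b}"

definition cons_diffs :: "real set \<Rightarrow> real set" where
  "cons_diffs A = {next_in A a - a | a. a \<in> non_max A}"

definition diff_class :: "real set \<Rightarrow> real \<Rightarrow> real set" where
  "diff_class A h = {a \<in> non_max A. next_in A a - a = h}"

definition sumsum_diff :: "real set \<Rightarrow> real set" where
  "sumsum_diff A = {a + b - c | a b c. a \<in> A \<and> b \<in> A \<and> c \<in> A}"

end

theory Submission
  imports Defs "HOL-Library.Discrete_Functions"
begin

text \<open>Group the consecutive differences into dyadic classes according to the size of
  \<open>A\<^sub>h\<close>; since \<open>\<Sum>\<^sub>h |A\<^sub>h| = N - 1\<close> and there are at most \<open>log\<^sub>2 N + 1\<close> classes, one class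
  \<open>H'\<close> with \<open>L \<le> |A\<^sub>h| \<le> 2L\<close> carries a \<open>1/(log\<^sub>2 N + 1)\<close> share of the mass, giving (i).
  For (ii), every pair \<open>g \<le> h\<close> in \<open>H'\<close> and every \<open>a \<in> A\<^sub>h\<close> give the element
  \<open>a + g = a + a\<^sub>j\<^sub>+\<^sub>1 - a\<^sub>j\<close> of \<open>A + A - A\<close> (where \<open>g = a\<^sub>j\<^sub>+\<^sub>1 - a\<^sub>j\<close>), lying in the
  half-open gap \<open>(a, a + h]\<close> after \<open>a\<close>; these gaps are disjoint, so all
  \<open>\<ge> L |H'|\<^sup>2/2\<close> of these elements are distinct.\<close>

lemma finite_non_max: "finite A \<Longrightarrow> finite (non_max A)"
  unfolding non_max_def by simp

lemma finite_cons_diffs: "finite A \<Longrightarrow> finite (cons_diffs A)"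
  unfolding cons_diffs_def by (simp add: finite_non_max)

lemma finite_diff_class: "finite A \<Longrightarrow> finite (diff_class A h)"
  unfolding diff_class_def by (simp add: finite_non_max)

lemma finite_sumsum_diff:
  assumes "finite A"
  shows "finite (sumsum_diff A)"
proof -
  have "sumsum_diff A = (\<lambda>(a, b, c). a + b - c) ` (A \<times> A \<times> A)"
    unfolding sumsum_diff_def by force
  then show ?thesis using assms by simp
qed

lemma non_max_eq:
  assumes "finite A"
  shows "non_max A = A - {Max A}"
proof
  show "non_max A \<subseteq> A - {Max A}"
    unfolding non_max_def using assms by (auto dest: Max_ge)
  show "A - {Max A} \<subseteq> non_max A"
    unfolding non_max_def using assms by (auto intro!: bexI[of _ "Max A"] Max_in simp: order.strict_iff_order)
qed

lemma card_non_max: "finite A \<Longrightarrow> A \<noteq> {} \<Longrightarrow> card (non_max A) = card A - 1"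
  by (simp add: non_max_eq Max_in)

lemma next_in_mem_and_least:
  assumes "finite A" "a \<in> non_max A"
  shows "next_in A a \<in> A" "a < next_in A a" "\<And>b. b \<in> A \<Longrightarrow> a < b \<Longrightarrow> next_in A a \<le> b"
proof -
  have ne: "{b \<in> A. a < b} \<noteq> {}" using assms(2) unfolding non_max_def by auto
  have fin: "finite {b \<in> A. a < b}" using assms(1) by simp
  show "next_in A a \<in> A" "a < next_in A a"
    using Min_in[OF fin ne] unfolding next_in_def by auto
  show "\<And>b. b \<in> A \<Longrightarrow> a < b \<Longrightarrow> next_in A a \<le> b"
    unfolding next_in_def using fin by simp
qed

lemma cons_diffs_pos: "finite A \<Longrightarrow> h \<in> cons_diffs A \<Longrightarrow> 0 < h"
  unfolding cons_diffs_def using next_in_mem_and_least(2) by fastforce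

lemma diff_class_nonempty: "h \<in> cons_diffs A \<Longrightarrow> diff_class A h \<noteq> {}"
  unfolding cons_diffs_def diff_class_def by auto

lemma sum_card_diff_class:
  assumes "finite A" "A \<noteq> {}"
  shows "(\<Sum>h\<in>cons_diffs A. card (diff_class A h)) = card A - 1"
proof -
  let ?gap = "\<lambda>a. next_in A a - a"
  have "(\<Sum>h\<in>cons_diffs A. \<Sum>a\<in>{a \<in> non_max A. ?gap a = h}. (1::nat)) = (\<Sum>a\<in>non_max A. 1)"
    by (rule sum.group) (auto simp: assms finite_non_max cons_diffs_def)
  then show ?thesis
    using card_non_max[OF assms] by (simp add: diff_class_def)
qed

lemma inj_on_plus_within_gaps:
  assumes "finite A"
  shows "inj_on (\<lambda>(a, g). a + g) {(a, g). a \<in> non_max A \<and> 0 < g \<and> g \<le> next_in A a - a}"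
proof -
  have separated: "a + g < b + g'"
    if "a \<in> non_max A" "g \<le> next_in A a - a" "b \<in> non_max A" "0 < g'" "a < b" for a b g g'
  proof -
    have "next_in A a \<le> b"
      using next_in_mem_and_least(3)[OF assms \<open>a \<in> non_max A\<close>] that(3,5)
      unfolding non_max_def by blast
    then show ?thesis using that by linarith
  qed
  show ?thesis
  proof (rule inj_onI, clarsimp)
    fix a g b g'
    assume "a + g = b + g'" "a \<in> non_max A" "b \<in> non_max A" "0 < g" "0 < g'"
      "g \<le> next_in A a - a" "g' \<le> next_in A b - b"
    with separated[of a g b g'] separated[of b g' a g] show "a = b \<and> g = g'"
      by (cases a b rule: linorder_cases) auto
  qed
qed

lemma add_cons_diff_mem_sumsum_diff:
  assumes "finite A" "a \<in> A" "g \<in> cons_diffs A"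
  shows "a + g \<in> sumsum_diff A"
proof -
  obtain c where c: "c \<in> non_max A" "g = next_in A c - c"
    using assms(3) unfolding cons_diffs_def by auto
  then have "c \<in> A" "next_in A c \<in> A"
    using next_in_mem_and_least(1)[OF assms(1)] unfolding non_max_def by auto
  moreover have "a + g = a + next_in A c - c" using c by simp
  ultimately show ?thesis
    unfolding sumsum_diff_def using assms(2) by blast
qed

lemma card_sq_le_ordered_pairs:
  fixes S :: "'a::linorder set"
  assumes "finite S"
  shows "card S ^ 2 \<le> 2 * card {(x, y). x \<in> S \<and> y \<in> S \<and> y \<le> x}"
proof -
  let ?P = "{(x, y). x \<in> S \<and> y \<in> S \<and> y \<le> x}"
  have fin: "finite ?P" by (rule finite_subset[of _ "S \<times> S"]) (use assms in auto)
  have "S \<times> S \<subseteq> ?P \<union> converse ?P" by auto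
  then have "card (S \<times> S) \<le> card (?P \<union> converse ?P)"
    using fin by (intro card_mono) auto
  also have "\<dots> \<le> 2 * card ?P" using card_Un_le[of ?P "converse ?P"] by simp
  finally show ?thesis by (simp add: card_cartesian_product power2_eq_square)
qed

lemma card_sumsum_diff_ge:
  assumes fin: "finite A" and sub: "H' \<subseteq> cons_diffs A"
    and large: "\<And>h. h \<in> H' \<Longrightarrow> L \<le> card (diff_class A h)"
  shows "real L * real (card H') ^ 2 / 2 \<le> real (card (sumsum_diff A))"
proof -
  define P where "P = {(h, g). h \<in> H' \<and> g \<in> H' \<and> g \<le> h}"
  define D where "D = Sigma P (\<lambda>p. diff_class A (fst p))"
  define shift where "shift = (\<lambda>((h::real, g::real), a::real). a + g)"
  have finH': "finite H'" using finite_subset[OF sub finite_cons_diffs[OF fin]] .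
  have finP: "finite P" by (rule finite_subset[of _ "H' \<times> H'"]) (use finH' in \<open>auto simp: P_def\<close>)
  have mem_D: "h \<in> H' \<and> g \<in> H' \<and> g \<le> h \<and> a \<in> diff_class A h" if "((h, g), a) \<in> D" for h g a
    using that by (simp add: D_def P_def)
  have "(\<Sum>p\<in>P. L) \<le> (\<Sum>p\<in>P. card (diff_class A (fst p)))"
    by (rule sum_mono) (auto simp: P_def large)
  also have "\<dots> = card D"
    unfolding D_def using finP by (simp add: card_SigmaI finite_diff_class fin)
  also have "\<dots> = card (shift ` D)"
  proof (rule card_image[symmetric], rule inj_onI)
    have in_gaps: "(a, g) \<in> {(a, g). a \<in> non_max A \<and> 0 < g \<and> g \<le> next_in A a - a}"
      if "((h, g), a) \<in> D" for h g a
      using mem_D[OF that] sub cons_diffs_pos[OF fin] by (auto simp: diff_class_def)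
    fix x y assume "x \<in> D" "y \<in> D" and eq: "shift x = shift y"
    obtain h g a h' g' a' where xy: "x = ((h, g), a)" "y = ((h', g'), a')"
      by (metis prod.collapse)
    have "(\<lambda>(a, g). a + g) (a, g) = (\<lambda>(a, g). a + g) (a', g')"
      using eq by (simp add: shift_def xy)
    then have "a = a'" "g = g'"
      using inj_onD[OF inj_on_plus_within_gaps[OF fin]] in_gaps \<open>x \<in> D\<close> \<open>y \<in> D\<close>
      unfolding xy by blast+
    moreover have "h = h'"
      using mem_D[OF \<open>x \<in> D\<close>[unfolded xy]] mem_D[OF \<open>y \<in> D\<close>[unfolded xy]] \<open>a = a'\<close>
      by (simp add: diff_class_def)
    ultimately show "x = y" by (simp add: xy)
  qed
  also have "\<dots> \<le> card (sumsum_diff A)"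
  proof (rule card_mono[OF finite_sumsum_diff[OF fin]], clarify)
    fix h g a assume "((h, g), a) \<in> D"
    then have "a \<in> A" "g \<in> cons_diffs A"
      using mem_D[OF \<open>((h, g), a) \<in> D\<close>] sub by (auto simp: diff_class_def non_max_def)
    then show "shift ((h, g), a) \<in> sumsum_diff A"
      unfolding shift_def by (simp add: add_cons_diff_mem_sumsum_diff fin)
  qed
  finally have "L * card P \<le> card (sumsum_diff A)" by (simp add: mult.commute)
  then have "real L * real (card P) \<le> real (card (sumsum_diff A))"
    by (simp only: of_nat_mult[symmetric] of_nat_le_iff)
  moreover have "card H' ^ 2 \<le> 2 * card P"
    using card_sq_le_ordered_pairs[OF finH'] unfolding P_def .
  then have "real (card H' ^ 2) \<le> real (2 * card P)" by (simp only: of_nat_le_iff)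
  then have "real (card H') ^ 2 \<le> 2 * real (card P)" by simp
  then have "real L * real (card H') ^ 2 \<le> real L * (2 * real (card P))"
    by (rule mult_left_mono) simp
  ultimately show ?thesis by simp
qed

lemma exists_ge_average:
  fixes f :: "'a \<Rightarrow> real"
  assumes "finite I" "I \<noteq> {}"
  obtains i where "i \<in> I" "(\<Sum>i\<in>I. f i) \<le> real (card I) * f i"
proof -
  have "\<exists>i\<in>I. (\<Sum>i\<in>I. f i) / real (card I) \<le> f i"
  proof (rule ccontr)
    assume "\<not> ?thesis"
    then have "(\<Sum>i\<in>I. f i) < (\<Sum>i\<in>I. (\<Sum>i\<in>I. f i) / real (card I))"
      using assms by (intro sum_strict_mono) auto
    then show False using assms by simp
  qed
  then show ?thesis
    using that assms by (auto simp: divide_le_eq card_gt_0_iff mult.commute)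
qed

lemma dyadic_pigeonhole:
  fixes c :: "'a \<Rightarrow> nat"
  assumes "finite H" and bounded: "\<And>h. h \<in> H \<Longrightarrow> c h \<le> M"
  obtains j where "j \<le> floor_log M"
    "real (\<Sum>h\<in>H. c h) \<le> real (floor_log M + 1) * real (\<Sum>h\<in>{h \<in> H. floor_log (c h) = j}. c h)"
proof -
  define S where "S j = real (\<Sum>h\<in>{h \<in> H. floor_log (c h) = j}. c h)" for j
  have "(\<Sum>j\<in>{0..floor_log M}. \<Sum>h\<in>{h \<in> H. floor_log (c h) = j}. c h) = (\<Sum>h\<in>H. c h)"
    by (rule sum.group) (use assms floor_log_le_iff in auto)
  then have "real (\<Sum>h\<in>H. c h) = sum S {0..floor_log M}"
    unfolding S_def of_nat_sum[symmetric] by simp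
  moreover obtain j where "j \<in> {0..floor_log M}"
    "sum S {0..floor_log M} \<le> real (card {0..floor_log M}) * S j"
    using exists_ge_average[of "{0..floor_log M}" S] by auto
  ultimately have "real (\<Sum>h\<in>H. c h) \<le> real (floor_log M + 1) * S j" by simp
  with \<open>j \<in> {0..floor_log M}\<close> show ?thesis
    using that[of j] unfolding S_def by simp
qed

lemma floor_log_class_bounds:
  assumes "0 < n" "floor_log n = j"
  shows "2 ^ j \<le> n" "n \<le> 2 * 2 ^ j"
  using floor_log_exp2_le[OF assms(1)] floor_log_exp2_ge[of n] assms(2) by auto

lemma exists_popular_dyadic_class:
  assumes fin: "finite A" and "A \<noteq> {}"
  obtains H' j where "H' \<subseteq> cons_diffs A"
    "\<And>h. h \<in> H' \<Longrightarrow> 2 ^ j \<le> card (diff_class A h) \<and> card (diff_class A h) \<le> 2 * 2 ^ j"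
    "real (card A - 1) \<le> 2 * real (floor_log (card A - 1) + 1) * 2 ^ j * real (card H')"
proof -
  define c where "c h = card (diff_class A h)" for h
  have "c h \<le> card A - 1" for h
  proof -
    have "diff_class A h \<subseteq> non_max A" unfolding diff_class_def by auto
    then show ?thesis
      unfolding c_def using card_mono[OF finite_non_max[OF fin]] card_non_max[OF assms] by simp
  qed
  then obtain j where j: "real (\<Sum>h\<in>cons_diffs A. c h)
      \<le> real (floor_log (card A - 1) + 1) * real (\<Sum>h\<in>{h \<in> cons_diffs A. floor_log (c h) = j}. c h)"
    using dyadic_pigeonhole[OF finite_cons_diffs[OF fin]] by blast
  define H' where "H' = {h \<in> cons_diffs A. floor_log (c h) = j}"
  have bounds: "2 ^ j \<le> c h \<and> c h \<le> 2 * 2 ^ j" if "h \<in> H'" for h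
  proof -
    have "0 < c h"
      using that diff_class_nonempty finite_diff_class[OF fin] by (auto simp: H'_def c_def card_gt_0_iff)
    then show ?thesis using floor_log_class_bounds that by (auto simp: H'_def)
  qed
  then have "(\<Sum>h\<in>H'. c h) \<le> card H' * (2 * 2 ^ j)"
    using sum_bounded_above[of H' c] by auto
  then have "real (\<Sum>h\<in>H'. c h) \<le> real (card H' * (2 * 2 ^ j))"
    by (simp only: of_nat_le_iff)
  also have "\<dots> = 2 * 2 ^ j * real (card H')" by simp
  finally have "real (\<Sum>h\<in>H'. c h) \<le> 2 * 2 ^ j * real (card H')" .
  then have "real (floor_log (card A - 1) + 1) * real (\<Sum>h\<in>H'. c h)
      \<le> real (floor_log (card A - 1) + 1) * (2 * 2 ^ j * real (card H'))"
    by (rule mult_left_mono) simp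
  with j have "real (card A - 1) \<le> real (floor_log (card A - 1) + 1) * (2 * 2 ^ j * real (card H'))"
    using sum_card_diff_class[OF assms] unfolding H'_def c_def by linarith
  then have "real (card A - 1) \<le> 2 * real (floor_log (card A - 1) + 1) * 2 ^ j * real (card H')"
    by (simp only: mult_ac)
  moreover have "H' \<subseteq> cons_diffs A" unfolding H'_def by auto
  ultimately show ?thesis
    using bounds by (intro that[of H' j]) (simp_all add: c_def)
qed

lemma card_over_log_le:
  fixes N :: nat
  assumes "16 \<le> N"
  shows "real N / (3 * log 2 (real N)) \<le> (real N - 1) / (2 * (real (floor_log (N - 1)) + 1))"
proof -
  define l where "l = log 2 (real N)"
  define K where "K = real (floor_log (N - 1))"
  have "log 2 (2 ^ 4) \<le> l" unfolding l_def using assms by (subst log_le_cancel_iff) auto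
  then have l4: "4 \<le> l" by (subst (asm) log_pow_cancel) auto
  have "2 ^ floor_log (N - 1) \<le> N" using floor_log_exp2_le[of "N - 1"] assms by simp
  then have "log 2 (2 ^ floor_log (N - 1)) \<le> l"
    unfolding l_def using assms by (subst log_le_cancel_iff) (auto simp flip: of_nat_le_iff)
  then have Kl: "K \<le> l" by (simp add: K_def)
  have "(l - 2) * (real N - 3) \<ge> 2 * 13" using assms l4 by (intro mult_mono) auto
  then have "2 * (l + 1) * real N \<le> 3 * l * (real N - 1)" by (simp add: algebra_simps)
  moreover have "2 * (K + 1) * real N \<le> 2 * (l + 1) * real N" using Kl by (intro mult_right_mono) auto
  ultimately have "real N * (2 * (K + 1)) \<le> (real N - 1) * (3 * l)" by (simp add: mult_ac)
  then show ?thesis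
    using l4 by (simp add: divide_simps K_def l_def)
qed

theorem lemma6:
  "\<exists>N0::nat. \<forall>A :: real set. finite A \<and> card A \<ge> N0 \<longrightarrow>
     (\<exists>H' :: real set. \<exists>L :: nat.
        H' \<noteq> {} \<and> H' \<subseteq> cons_diffs A \<and> L > 0 \<and>
        real L * real (card H') \<ge> real (card A) / (3 * log 2 (real (card A))) \<and>
        real (card (sumsum_diff A)) \<ge> real L * real (card H')^2 / 2 \<and>
        (\<forall>h\<in>H'. L \<le> card (diff_class A h) \<and> card (diff_class A h) \<le> 2 * L))"
proof (intro exI[of _ 16] allI impI, elim conjE)
  fix A :: "real set"
  assume fin: "finite A" and large: "16 \<le> card A"
  then have "A \<noteq> {}" by auto
  obtain H' j where sub: "H' \<subseteq> cons_diffs A"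
    and bounds: "\<And>h. h \<in> H' \<Longrightarrow> 2 ^ j \<le> card (diff_class A h) \<and> card (diff_class A h) \<le> 2 * 2 ^ j"
    and mass: "real (card A - 1) \<le> 2 * real (floor_log (card A - 1) + 1) * 2 ^ j * real (card H')"
    using exists_popular_dyadic_class[OF fin \<open>A \<noteq> {}\<close>] by blast
  define L :: nat where "L = 2 ^ j"
  have "(real (card A) - 1) / (2 * (real (floor_log (card A - 1)) + 1)) \<le> real L * real (card H')"
    using mass large by (simp add: L_def pos_divide_le_eq of_nat_diff ac_simps)
  then have lower: "real (card A) / (3 * log 2 (real (card A))) \<le> real L * real (card H')"
    using card_over_log_le[OF large] by linarith
  have "H' \<noteq> {}"
  proof
    assume "H' = {}"
    with mass large show False by simp
  qed
  moreover have "real L * real (card H') ^ 2 / 2 \<le> real (card (sumsum_diff A))"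
    by (rule card_sumsum_diff_ge[OF fin sub]) (simp add: bounds L_def)
  moreover have "L > 0" by (simp add: L_def)
  ultimately show "\<exists>H' L. H' \<noteq> {} \<and> H' \<subseteq> cons_diffs A \<and> L > 0 \<and>
        real L * real (card H') \<ge> real (card A) / (3 * log 2 (real (card A))) \<and>
        real (card (sumsum_diff A)) \<ge> real L * real (card H')^2 / 2 \<and>
        (\<forall>h\<in>H'. L \<le> card (diff_class A h) \<and> card (diff_class A h) \<le> 2 * L)"
    using sub lower bounds unfolding L_def by blast
qed

end
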